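(* Let $k\ge1$, let $\alpha_1,\dots,\alpha_k>-1$ and $\alpha_{k+1}>0$ be real, and put $\beta_j=\alpha_{j+1}+\alpha_{j+2}+\dots+\alpha_k+(k-j)+\alpha_{k+1}$ for $j=1,\dots,k$ (so $\beta_k=\alpha_{k+1}$). Let $(x_1,\dots,x_k)$ have the type-1 Dirichlet density $$f_1(x_1,\dots,x_k)=C\,x_1^{\alpha_1}\cdots x_k^{\alpha_k}(1-x_1-\dots-x_k)^{\alpha_{k+1}-1}$$ on $\{0<x_j<1,\ j=1,\dots,k,\ 0<x_1+\dots+x_k<1\}$ and $0$ elsewhere, where $C=\dfrac{\Gamma(\alpha_1+\dots+\alpha_{k+1}+k)}{\{\prod_{j=1}^k\Gamma(\alpha_j+1)\}\Gamma(\alpha_{k+1})}$. Let $(v_1,\dots,v_k)$ be a vector of positive real random variables with an arbitrary joint density $f(v_1,\dots,v_k)$ on $(0,\infty)^k$, independent of $(x_1,\dots,x_k)$. Let $$u_j=v_j\,\frac{x_j}{1-x_1-\dots-x_{j-1}},\quad j=1,\dots,k$$ (for $j=1$ the denominator is $1$), and let $g(u_1,\dots,u_k)$ be the joint density of $(u_1,\dots,u_k)$. Then, for (almost every) $(u_1,\dots,u_k)\in(0,\infty)^k$, $$\Big\{\prod_{j=1}^k\frac{\Gamma(\alpha_j+1)}{\Gamma(\alpha_j+\beta_j+1)}\Big\}g(u_1,\dots,u_k)=K_{u_j,j=1,\dots,k}^{(\alpha_j,\beta_j),j=1,\dots,k}f(u_1,\dots,u_k).$$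
   Context: The multivariable Kober fractional integral operator of the second kind is defined, for parameters $\zeta_j$ and $\alpha_j$ with $\alpha_j>0$, by $$K_{u_j,j=1,\dots,k}^{(\zeta_j,\alpha_j),j=1,\dots,k}f(u_1,\dots,u_k)=\Big\{\prod_{j=1}^k\frac{u_j^{\zeta_j}}{\Gamma(\alpha_j)}\Big\}\int_{v_1>u_1}\cdots\int_{v_k>u_k}\Big\{\prod_{j=1}^k(v_j-u_j)^{\alpha_j-1}v_j^{-\zeta_j-\alpha_j}\Big\}f(v_1,\dots,v_k)\,dv_1\cdots dv_k;$$ here it is applied with $\zeta_j=\alpha_j$ and $\alpha_j$ replaced by $\beta_j$. *)

theory Defs
  imports "HOL-Probability.Probability"
begin

text \<open>k-dimensional vectors are functions on the index set {1..k}, with the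
  product Borel measure.\<close>
abbreviation lbk :: "nat \<Rightarrow> (nat \<Rightarrow> real) measure" where
  "lbk k \<equiv> PiM {1..k} (\<lambda>_. lborel)"

definition pos_orthant :: "nat \<Rightarrow> (nat \<Rightarrow> real) set" where
  "pos_orthant k = {u. \<forall>j\<in>{1..k}. 0 < u j}"

definition dir_beta :: "nat \<Rightarrow> (nat \<Rightarrow> real) \<Rightarrow> nat \<Rightarrow> real" where
  "dir_beta k \<alpha> j = (\<Sum>i\<in>{j+1..k}. \<alpha> i) + real (k - j) + \<alpha> (k+1)"

definition dirichlet_const :: "nat \<Rightarrow> (nat \<Rightarrow> real) \<Rightarrow> real" where
  "dirichlet_const k \<alpha> =
     Gamma ((\<Sum>j\<in>{1..k+1}. \<alpha> j) + real k) /
     ((\<Prod>j\<in>{1..k}. Gamma (\<alpha> j + 1)) * Gamma (\<alpha> (k+1)))"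

definition dirichlet_support :: "nat \<Rightarrow> (nat \<Rightarrow> real) set" where
  "dirichlet_support k = {x. (\<forall>j\<in>{1..k}. 0 < x j \<and> x j < 1) \<and>
        0 < (\<Sum>j\<in>{1..k}. x j) \<and> (\<Sum>j\<in>{1..k}. x j) < 1}"

definition dirichlet1_density :: "nat \<Rightarrow> (nat \<Rightarrow> real) \<Rightarrow> (nat \<Rightarrow> real) \<Rightarrow> real" where
  "dirichlet1_density k \<alpha> x =
     (if x \<in> dirichlet_support k then
        dirichlet_const k \<alpha> * (\<Prod>j\<in>{1..k}. x j powr \<alpha> j) *
        (1 - (\<Sum>j\<in>{1..k}. x j)) powr (\<alpha> (k+1) - 1)
      else 0)"

text \<open>Multivariable Kober fractional integral operator of the second kind,
  with parameters zeta_j and alpha_j (here called a_j).\<close>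
definition kober2 :: "nat \<Rightarrow> (nat \<Rightarrow> real) \<Rightarrow> (nat \<Rightarrow> real) \<Rightarrow>
    ((nat \<Rightarrow> real) \<Rightarrow> real) \<Rightarrow> (nat \<Rightarrow> real) \<Rightarrow> real" where
  "kober2 k \<zeta> a f u =
     (\<Prod>j\<in>{1..k}. u j powr \<zeta> j / Gamma (a j)) *
     (LINT v : {v \<in> space (lbk k). \<forall>j\<in>{1..k}. u j < v j} | lbk k.
        (\<Prod>j\<in>{1..k}. (v j - u j) powr (a j - 1) * v j powr (- \<zeta> j - a j)) * f v)"

definition u_transform :: "nat \<Rightarrow> (nat \<Rightarrow> real) \<Rightarrow> (nat \<Rightarrow> real) \<Rightarrow> (nat \<Rightarrow> real)" where
  "u_transform k x v = (\<lambda>j\<in>{1..k}. v j * x j / (1 - (\<Sum>i\<in>{1..<j}. x i)))"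

end

theory Submission
  imports Defs
begin

text \<open>For fixed v the map x \<mapsto> u is triangular: u_j depends on x_1, ..., x_j only.
  Integrating the Dirichlet density against it from the last coordinate down, the substitution
  x_n = (1 - x_1 - ... - x_(n-1)) u_n / v_n splits off the factor
  u_n^(\<alpha>_n) (v_n - u_n)^(\<beta>_n - 1) v_n^(-\<alpha>_n - \<beta>_n) on 0 < u_n < v_n and leaves a Dirichlet
  weight in one dimension less, whose last exponent absorbs \<alpha>_n + 1.  So given V = v, U has
  density C times a product of Kober kernels; averaging over the independent V gives g, and C
  together with the Gamma ratios telescopes to the constant 1 / \<Prod>_j \<Gamma>(\<beta>_j) of the Kober
  operator.  No Beta integral is needed.\<close>

interpretation lborel_product: product_sigma_finite "\<lambda>_::nat. lborel" by standard

lemma (in prob_space) distributed_indep_transform: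
  assumes S: "sigma_finite_measure S" and T: "sigma_finite_measure T" and R: "sigma_finite_measure R"
    and X: "distributed M S X Px" and Y: "distributed M T Y Py" and indep: "indep_var S X T Y"
    and [measurable]: "(\<lambda>(x, y). \<Phi> x y) \<in> S \<Otimes>\<^sub>M T \<rightarrow>\<^sub>M R"
    and [measurable]: "(\<lambda>(u, y). K u y) \<in> borel_measurable (R \<Otimes>\<^sub>M T)"
    and image: "\<And>y A. y \<in> space T \<Longrightarrow> Py y \<noteq> 0 \<Longrightarrow> A \<in> sets R \<Longrightarrow>
        (\<integral>\<^sup>+x. Px x * indicator A (\<Phi> x y) \<partial>S) = (\<integral>\<^sup>+u. K u y * indicator A u \<partial>R)"
  shows "distributed M R (\<lambda>\<omega>. \<Phi> (X \<omega>) (Y \<omega>)) (\<lambda>u. \<integral>\<^sup>+y. Py y * K u y \<partial>T)"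
proof -
  interpret ST: pair_sigma_finite S T using S T by (simp add: pair_sigma_finite_def)
  interpret RT: pair_sigma_finite R T using R T by (simp add: pair_sigma_finite_def)
  have [measurable]: "Px \<in> borel_measurable S" "Py \<in> borel_measurable T"
    "X \<in> M \<rightarrow>\<^sub>M S" "Y \<in> M \<rightarrow>\<^sub>M T"
    using X Y by (auto simp: distributed_def)
  have joint: "distributed M (S \<Otimes>\<^sub>M T) (\<lambda>\<omega>. (X \<omega>, Y \<omega>)) (\<lambda>(x, y). Px x * Py y)"
    by (rule distributed_joint_indep[OF S T X Y indep])
  have "distr M R (\<lambda>\<omega>. \<Phi> (X \<omega>) (Y \<omega>)) = density R (\<lambda>u. \<integral>\<^sup>+y. Py y * K u y \<partial>T)"
  proof (rule measure_eqI)
    fix A assume "A \<in> sets (distr M R (\<lambda>\<omega>. \<Phi> (X \<omega>) (Y \<omega>)))"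
    then have [measurable]: "A \<in> sets R" by simp
    have "emeasure (distr M R (\<lambda>\<omega>. \<Phi> (X \<omega>) (Y \<omega>))) A
        = (\<integral>\<^sup>+u. indicator A u \<partial>distr M R (\<lambda>\<omega>. \<Phi> (X \<omega>) (Y \<omega>)))"
      by (rule nn_integral_indicator[symmetric]) simp
    also have "\<dots> = (\<integral>\<^sup>+\<omega>. indicator A (\<Phi> (X \<omega>) (Y \<omega>)) \<partial>M)"
      by (rule nn_integral_distr) measurable
    also have "\<dots> = (\<integral>\<^sup>+z. (case z of (x, y) \<Rightarrow> Px x * Py y) *
        indicator A (case z of (x, y) \<Rightarrow> \<Phi> x y) \<partial>(S \<Otimes>\<^sub>M T))"
      using distributed_nn_integral[OF joint, of "\<lambda>z. indicator A (case z of (x, y) \<Rightarrow> \<Phi> x y)"]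
      by simp
    also have "\<dots> = (\<integral>\<^sup>+y. \<integral>\<^sup>+x. Py y * (Px x * indicator A (\<Phi> x y)) \<partial>S \<partial>T)"
      by (subst ST.nn_integral_snd[symmetric]) (measurable, simp add: mult_ac)
    also have "\<dots> = (\<integral>\<^sup>+y. \<integral>\<^sup>+u. Py y * K u y * indicator A u \<partial>R \<partial>T)"
    proof (intro nn_integral_cong)
      fix y assume "y \<in> space T"
      then show "(\<integral>\<^sup>+x. Py y * (Px x * indicator A (\<Phi> x y)) \<partial>S)
          = (\<integral>\<^sup>+u. Py y * K u y * indicator A u \<partial>R)"
        using image[of y A] by (cases "Py y = 0") (simp_all add: nn_integral_cmult mult.assoc)
    qed
    also have "\<dots> = (\<integral>\<^sup>+u. \<integral>\<^sup>+y. Py y * K u y * indicator A u \<partial>T \<partial>R)"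
      by (rule RT.Fubini') measurable
    also have "\<dots> = (\<integral>\<^sup>+u. (\<integral>\<^sup>+y. Py y * K u y \<partial>T) * indicator A u \<partial>R)"
      by (intro nn_integral_cong nn_integral_multc) measurable
    also have "\<dots> = emeasure (density R (\<lambda>u. \<integral>\<^sup>+y. Py y * K u y \<partial>T)) A"
      by (rule emeasure_density[symmetric]) measurable
    finally show "emeasure (distr M R (\<lambda>\<omega>. \<Phi> (X \<omega>) (Y \<omega>))) A
        = emeasure (density R (\<lambda>u. \<integral>\<^sup>+y. Py y * K u y \<partial>T)) A" .
  qed simp
  then show ?thesis by (simp add: distributed_def)
qed

definition dirichlet_weight :: "nat \<Rightarrow> (nat \<Rightarrow> real) \<Rightarrow> (nat \<Rightarrow> real) \<Rightarrow> real" where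
  "dirichlet_weight n a x =
     (if (\<forall>j\<in>{1..n}. 0 < x j) \<and> (\<Sum>j\<in>{1..n}. x j) < 1
      then (\<Prod>j\<in>{1..n}. x j powr a j) * (1 - (\<Sum>j\<in>{1..n}. x j)) powr (a (n+1) - 1) else 0)"

text \<open>\<open>kober_kernel a b w v / Gamma b\<close> is the integral kernel of \<open>kober2\<close> with parameters
  \<open>(a, b)\<close>, prefactor \<open>w powr a\<close> included.\<close>
definition kober_kernel :: "real \<Rightarrow> real \<Rightarrow> real \<Rightarrow> real \<Rightarrow> real" where
  "kober_kernel a b w v =
     (if 0 < w \<and> w < v then w powr a * (v - w) powr (b - 1) * v powr (- a - b) else 0)"

lemma dirichlet_weight_nonneg: "0 \<le> dirichlet_weight n a x"
  by (simp add: dirichlet_weight_def prod_nonneg)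

lemma kober_kernel_nonneg: "0 \<le> kober_kernel a b w v"
  by (simp add: kober_kernel_def)

lemma dirichlet_weight_measurable[measurable]: "dirichlet_weight n a \<in> borel_measurable (lbk n)"
  unfolding dirichlet_weight_def by measurable

lemma kober_kernel_measurable[measurable (raw)]:
  assumes [measurable]: "f \<in> borel_measurable M" "g \<in> borel_measurable M"
  shows "(\<lambda>x. kober_kernel a b (f x) (g x)) \<in> borel_measurable M"
  unfolding kober_kernel_def by measurable

lemma u_transform_measurable[measurable]: "(\<lambda>x. u_transform n x v) \<in> lbk n \<rightarrow>\<^sub>M lbk n"
  unfolding u_transform_def by measurable

lemma u_transform_measurable_pair[measurable]:
  "(\<lambda>(x, v). u_transform n x v) \<in> lbk n \<Otimes>\<^sub>M lbk n \<rightarrow>\<^sub>M lbk n"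
  unfolding u_transform_def by measurable

lemma u_transform_in_space[measurable]: "u_transform n x v \<in> space (lbk n)"
  by (simp add: u_transform_def space_PiM)

lemma sigma_finite_lbk: "sigma_finite_measure (lbk n)"
proof -
  interpret finite_product_sigma_finite "\<lambda>_. lborel" "{1..n}" by standard simp
  show ?thesis ..
qed

lemma measurable_fun_upd_Suc[measurable (raw)]:
  assumes F[measurable]: "F \<in> N \<rightarrow>\<^sub>M lbk n" and [measurable]: "e \<in> borel_measurable N"
  shows "(\<lambda>z. (F z)(Suc n := e z)) \<in> N \<rightarrow>\<^sub>M lbk (Suc n)"
proof -
  have "(\<lambda>z. \<lambda>j\<in>{1..Suc n}. if j = Suc n then e z else F z j) \<in> N \<rightarrow>\<^sub>M lbk (Suc n)"
  proof (rule measurable_restrict)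
    fix j assume j: "j \<in> {1..Suc n}"
    show "(\<lambda>z. if j = Suc n then e z else F z j) \<in> N \<rightarrow>\<^sub>M lborel"
    proof (cases "j = Suc n")
      case False
      then have "j \<in> {1..n}" using j by auto
      then have "(\<lambda>z. F z j) \<in> borel_measurable N"
        by (intro measurable_compose[OF F]) measurable
      then show ?thesis using False by simp
    qed simp
  qed
  moreover have "(F z)(Suc n := e z) = (\<lambda>j\<in>{1..Suc n}. if j = Suc n then e z else F z j)"
    if "z \<in> space N" for z
  proof -
    have "F z \<in> space (lbk n)" using measurable_space[OF F that] .
    then show ?thesis by (auto simp: space_PiM PiE_def extensional_def fun_eq_iff)
  qed
  ultimately show ?thesis by (simp cong: measurable_cong)
qed

lemma nn_integral_lbk_Suc:
  assumes "f \<in> borel_measurable (lbk (Suc n))"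
  shows "(\<integral>\<^sup>+x. f x \<partial>lbk (Suc n)) = (\<integral>\<^sup>+x. \<integral>\<^sup>+y. f (x(Suc n := y)) \<partial>lborel \<partial>lbk n)"
  using lborel_product.product_nn_integral_insert[of "{1..n}" "Suc n" f] assms
  by (simp add: atLeastAtMostSuc_conv)

lemma nn_integral_lbk_Suc_rev:
  assumes "f \<in> borel_measurable (lbk (Suc n))"
  shows "(\<integral>\<^sup>+x. f x \<partial>lbk (Suc n)) = (\<integral>\<^sup>+y. \<integral>\<^sup>+x. f (x(Suc n := y)) \<partial>lbk n \<partial>lborel)"
  using lborel_product.product_nn_integral_insert_rev[of "{1..n}" "Suc n" f] assms
  by (simp add: atLeastAtMostSuc_conv)

lemma u_transform_fun_upd_Suc:
  "u_transform (Suc n) (x(Suc n := y)) v =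
     (u_transform n x v)(Suc n := v (Suc n) * y / (1 - (\<Sum>j\<in>{1..n}. x j)))"
proof
  fix j
  have "(\<Sum>i\<in>{1..<j}. (x(Suc n := y)) i) = (\<Sum>i\<in>{1..<j}. x i)" if "j \<le> Suc n"
    using that by (intro sum.cong) auto
  then show "u_transform (Suc n) (x(Suc n := y)) v j =
      ((u_transform n x v)(Suc n := v (Suc n) * y / (1 - (\<Sum>j\<in>{1..n}. x j)))) j"
    by (auto simp: u_transform_def atLeastLessThanSuc_atLeastAtMost)
qed

lemma dirichlet_weight_fun_upd_Suc:
  "dirichlet_weight (Suc n) a (x(Suc n := y)) =
     (if (\<forall>j\<in>{1..n}. 0 < x j) \<and> 0 < y \<and> (\<Sum>j\<in>{1..n}. x j) + y < 1
      then (\<Prod>j\<in>{1..n}. x j powr a j) * y powr a (Suc n) *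
           (1 - (\<Sum>j\<in>{1..n}. x j) - y) powr (a (Suc (Suc n)) - 1)
      else 0)"
proof -
  have "(\<Sum>j\<in>{1..n}. (x(Suc n := y)) j) = (\<Sum>j\<in>{1..n}. x j)"
    "(\<Prod>j\<in>{1..n}. (x(Suc n := y)) j powr a j) = (\<Prod>j\<in>{1..n}. x j powr a j)"
    by (intro sum.cong prod.cong; simp)+
  moreover have "(\<forall>j\<in>{1..Suc n}. 0 < (x(Suc n := y)) j) \<longleftrightarrow> (\<forall>j\<in>{1..n}. 0 < x j) \<and> 0 < y"
    by (auto simp: atLeastAtMostSuc_conv)
  ultimately show ?thesis
    by (simp add: dirichlet_weight_def sum.cl_ivl_Suc prod.cl_ivl_Suc diff_diff_eq)
qed

text \<open>Integrating out \<open>x (Suc n)\<close> from \<open>dirichlet_weight (Suc n) a\<close> merges the exponents of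
  \<open>x (Suc n)\<close> and of \<open>1 - x 1 - \<dots> - x (Suc n)\<close> into the last exponent of
  \<open>dirichlet_weight n\<close>.\<close>
abbreviation merge_last :: "nat \<Rightarrow> (nat \<Rightarrow> real) \<Rightarrow> nat \<Rightarrow> real" where
  "merge_last n a \<equiv> a(Suc n := a (Suc n) + a (Suc (Suc n)) + 1)"

lemma dirichlet_weight_merge_last:
  "dirichlet_weight n (merge_last n a) x =
     (if (\<forall>j\<in>{1..n}. 0 < x j) \<and> (\<Sum>j\<in>{1..n}. x j) < 1
      then (\<Prod>j\<in>{1..n}. x j powr a j) * (1 - (\<Sum>j\<in>{1..n}. x j)) powr (a (Suc n) + a (Suc (Suc n)))
      else 0)"
proof -
  have "(\<Prod>j\<in>{1..n}. x j powr (merge_last n a) j) = (\<Prod>j\<in>{1..n}. x j powr a j)"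
    by (intro prod.cong) auto
  then show ?thesis by (simp add: dirichlet_weight_def)
qed

lemma dir_beta_merge_last:
  assumes "j \<le> n"
  shows "dir_beta n (merge_last n a) j = dir_beta (Suc n) a j"
proof -
  have "(\<Sum>i\<in>{j+1..n}. (merge_last n a) i) = (\<Sum>i\<in>{j+1..n}. a i)"
    by (intro sum.cong) auto
  moreover have "real (Suc n - j) = real (n - j) + 1" using assms by simp
  ultimately show ?thesis using assms by (simp add: dir_beta_def sum.cl_ivl_Suc)
qed

lemma dir_beta_last: "dir_beta n a n = a (n+1)"
  by (simp add: dir_beta_def)

lemma scaled_beta_weight_eq_kober_kernel:
  fixes c V w p q :: real
  assumes "0 < c" "0 < V"
  shows "c / V * (if 0 < c / V * w \<and> c / V * w < c
                  then (c / V * w) powr p * (c - c / V * w) powr (q - 1) else 0)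
       = c powr (p + q) * kober_kernel p q w V"
proof -
  define r where "r = c / V"
  have r: "0 < r" using assms by (simp add: r_def)
  have range: "0 < r * w \<and> r * w < c \<longleftrightarrow> 0 < w \<and> w < V"
    using assms by (auto simp: r_def zero_less_mult_iff field_simps)
  have "r * ((r * w) powr p * (c - r * w) powr (q - 1))
      = c powr (p + q) * (w powr p * (V - w) powr (q - 1) * V powr (- p - q))"
    if w: "0 < w" "w < V"
  proof -
    have "c - r * w = r * (V - w)" using assms by (simp add: r_def field_simps)
    then have "r * ((r * w) powr p * (c - r * w) powr (q - 1))
        = r powr (p + (q - 1) + 1) * (w powr p * (V - w) powr (q - 1))"
      using r w by (simp add: powr_mult powr_add powr_diff)
    also have "r powr (p + (q - 1) + 1) = c powr (p + q) * V powr (- p - q)"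
      using assms powr_minus[of V "p + q"] by (simp add: r_def powr_divide field_simps)
    finally show ?thesis by (simp add: mult_ac)
  qed
  then show ?thesis by (simp add: r_def[symmetric] range kober_kernel_def)
qed

text \<open>The substitution \<open>y = (c / V) w\<close> turns a Beta-type weight on \<open>(0, c)\<close> into the
  Kober kernel in \<open>w\<close>.\<close>
lemma nn_integral_beta_weight_substitution:
  fixes c V p q :: real
  assumes "0 < c" "0 < V" and [measurable]: "h \<in> borel_measurable borel"
  shows "(\<integral>\<^sup>+y. h (V * y / c) *
            ennreal (if 0 < y \<and> y < c then y powr p * (c - y) powr (q - 1) else 0) \<partial>lborel)
       = ennreal (c powr (p + q)) * (\<integral>\<^sup>+w. h w * ennreal (kober_kernel p q w V) \<partial>lborel)"
    (is "(\<integral>\<^sup>+y. h (V * y / c) * ennreal (?B y) \<partial>lborel) = _")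
proof -
  have "0 < c / V" using assms by simp
  have "(\<integral>\<^sup>+y. h (V * y / c) * ennreal (?B y) \<partial>lborel)
      = ennreal (c / V) * (\<integral>\<^sup>+w. h w * ennreal (?B (c / V * w)) \<partial>lborel)"
    using nn_integral_real_affine[of "\<lambda>y. h (V * y / c) * ennreal (?B y)" "c / V" 0] assms
    by (simp cong: if_cong)
  also have "\<dots> = (\<integral>\<^sup>+w. ennreal (c / V) * (h w * ennreal (?B (c / V * w))) \<partial>lborel)"
    by (intro nn_integral_cmult[symmetric]) measurable
  also have "\<dots> = (\<integral>\<^sup>+w. ennreal (c powr (p + q)) * (h w * ennreal (kober_kernel p q w V)) \<partial>lborel)"
  proof (intro nn_integral_cong)
    fix w :: real
    have "ennreal (c / V) * ennreal (?B (c / V * w))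
        = ennreal (c powr (p + q)) * ennreal (kober_kernel p q w V)"
      using scaled_beta_weight_eq_kober_kernel[OF assms(1,2), of w p q] \<open>0 < c / V\<close>
      by (simp add: ennreal_mult[symmetric] kober_kernel_nonneg del: ennreal_mult')
    then show "ennreal (c / V) * (h w * ennreal (?B (c / V * w)))
        = ennreal (c powr (p + q)) * (h w * ennreal (kober_kernel p q w V))"
      by (metis mult.left_commute)
  qed
  also have "\<dots> = ennreal (c powr (p + q)) * (\<integral>\<^sup>+w. h w * ennreal (kober_kernel p q w V) \<partial>lborel)"
    by (intro nn_integral_cmult) measurable
  finally show ?thesis .
qed

lemma nn_integral_dirichlet_weight_last:
  assumes [measurable]: "H \<in> borel_measurable (lbk (Suc n))" and v_pos: "0 < v (Suc n)"
  shows "(\<integral>\<^sup>+y. H (u_transform (Suc n) (x(Suc n := y)) v) *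
            ennreal (dirichlet_weight (Suc n) a (x(Suc n := y))) \<partial>lborel)
       = ennreal (dirichlet_weight n (merge_last n a) x) *
         (\<integral>\<^sup>+w. H ((u_transform n x v)(Suc n := w)) *
            ennreal (kober_kernel (a (Suc n)) (a (Suc (Suc n))) w (v (Suc n))) \<partial>lborel)"
proof (cases "(\<forall>j\<in>{1..n}. 0 < x j) \<and> (\<Sum>j\<in>{1..n}. x j) < 1")
  case False
  then have "dirichlet_weight (Suc n) a (x(Suc n := y)) = 0" for y
    by (auto simp: dirichlet_weight_fun_upd_Suc)
  then show ?thesis
    using False by (auto simp: dirichlet_weight_merge_last)
next
  case True
  define c where "c = 1 - (\<Sum>j\<in>{1..n}. x j)"
  define pr where "pr = (\<Prod>j\<in>{1..n}. x j powr a j)"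
  define h where "h w = H ((u_transform n x v)(Suc n := w))" for w
  have [measurable]: "h \<in> borel_measurable borel" unfolding h_def by measurable
  have "0 < c" "0 \<le> pr" using True by (auto simp: c_def pr_def prod_nonneg)
  have "(\<integral>\<^sup>+y. H (u_transform (Suc n) (x(Suc n := y)) v) *
            ennreal (dirichlet_weight (Suc n) a (x(Suc n := y))) \<partial>lborel)
      = (\<integral>\<^sup>+y. ennreal pr * (h (v (Suc n) * y / c) * ennreal (if 0 < y \<and> y < c
            then y powr a (Suc n) * (c - y) powr (a (Suc (Suc n)) - 1) else 0)) \<partial>lborel)"
  proof (intro nn_integral_cong)
    fix y :: real
    have "dirichlet_weight (Suc n) a (x(Suc n := y)) = pr * (if 0 < y \<and> y < c
            then y powr a (Suc n) * (c - y) powr (a (Suc (Suc n)) - 1) else 0)"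
      using True by (auto simp: dirichlet_weight_fun_upd_Suc c_def pr_def diff_diff_eq)
    then show "H (u_transform (Suc n) (x(Suc n := y)) v) *
            ennreal (dirichlet_weight (Suc n) a (x(Suc n := y)))
        = ennreal pr * (h (v (Suc n) * y / c) * ennreal (if 0 < y \<and> y < c
            then y powr a (Suc n) * (c - y) powr (a (Suc (Suc n)) - 1) else 0))"
      using \<open>0 \<le> pr\<close> by (simp add: u_transform_fun_upd_Suc h_def c_def ennreal_mult mult_ac)
  qed
  also have "\<dots> = ennreal pr * (ennreal (c powr (a (Suc n) + a (Suc (Suc n)))) *
         (\<integral>\<^sup>+w. h w * ennreal (kober_kernel (a (Suc n)) (a (Suc (Suc n))) w (v (Suc n))) \<partial>lborel))"
    by (simp add: nn_integral_cmult nn_integral_beta_weight_substitution[OF \<open>0 < c\<close> v_pos])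
  also have "\<dots> = ennreal (dirichlet_weight n (merge_last n a) x) *
         (\<integral>\<^sup>+w. h w * ennreal (kober_kernel (a (Suc n)) (a (Suc (Suc n))) w (v (Suc n))) \<partial>lborel)"
    using True \<open>0 \<le> pr\<close>
    by (simp add: dirichlet_weight_merge_last c_def pr_def ennreal_mult mult.assoc)
  finally show ?thesis unfolding h_def .
qed

lemma prod_fun_upd_Suc:
  "(\<Prod>j\<in>{1..Suc n}. F j ((u(Suc n := w)) j)) = (\<Prod>j\<in>{1..n}. F j (u j)) * F (Suc n) w"
proof -
  have "(\<Prod>j\<in>{1..n}. F j ((u(Suc n := w)) j)) = (\<Prod>j\<in>{1..n}. F j (u j))"
    by (intro prod.cong) auto
  then show ?thesis by (simp add: prod.cl_ivl_Suc)
qed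

text \<open>Induction step: with \<open>x 1, \<dots>, x n\<close> fixed, \<open>u (Suc n)\<close> depends on \<open>x (Suc n)\<close> alone,
  so integrating it out first leaves dimension \<open>n\<close> with the merged exponent, for which
  \<open>dir_beta\<close> is unchanged.\<close>
lemma nn_integral_u_transform_dirichlet_weight:
  assumes "\<forall>j\<in>{1..n}. 0 < v j" and "H \<in> borel_measurable (lbk n)"
  shows "(\<integral>\<^sup>+x. H (u_transform n x v) * ennreal (dirichlet_weight n a x) \<partial>lbk n)
       = (\<integral>\<^sup>+u. H u * ennreal (\<Prod>j\<in>{1..n}. kober_kernel (a j) (dir_beta n a j) (u j) (v j)) \<partial>lbk n)"
  using assms
proof (induction n arbitrary: a H)
  case 0
  have "u_transform 0 x v = (\<lambda>_. undefined)" for x by (simp add: u_transform_def fun_eq_iff)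
  then show ?case by (simp add: PiM_empty nn_integral_count_space_finite dirichlet_weight_def)
next
  case (Suc n)
  note H[measurable] = Suc.prems(2)
  interpret pair_sigma_finite "lbk n" lborel
    unfolding pair_sigma_finite_def by (intro conjI sigma_finite_lbk lborel.sigma_finite_measure_axioms)
  define K where "K u = ennreal (\<Prod>j\<in>{1..n}. kober_kernel (a j) (dir_beta (Suc n) a j) (u j) (v j))" for u
  define k where "k w = ennreal (kober_kernel (a (Suc n)) (a (Suc (Suc n))) w (v (Suc n)))" for w
  have [measurable]: "K \<in> borel_measurable (lbk n)" "k \<in> borel_measurable borel"
    unfolding K_def k_def by measurable
  have IH: "(\<integral>\<^sup>+x. H ((u_transform n x v)(Suc n := w)) *
      ennreal (dirichlet_weight n (merge_last n a) x) \<partial>lbk n)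
      = (\<integral>\<^sup>+u. H (u(Suc n := w)) * K u \<partial>lbk n)" for w
  proof -
    have Hw: "(\<lambda>u. H (u(Suc n := w))) \<in> borel_measurable (lbk n)" by measurable
    have "(\<Prod>j\<in>{1..n}. kober_kernel (merge_last n a j) (dir_beta n (merge_last n a) j) (u j) (v j))
        = (\<Prod>j\<in>{1..n}. kober_kernel (a j) (dir_beta (Suc n) a j) (u j) (v j))" for u
      by (intro prod.cong) (auto simp: dir_beta_merge_last)
    moreover have "(\<integral>\<^sup>+x. H ((u_transform n x v)(Suc n := w)) *
          ennreal (dirichlet_weight n (merge_last n a) x) \<partial>lbk n)
      = (\<integral>\<^sup>+u. H (u(Suc n := w)) * ennreal (\<Prod>j\<in>{1..n}.
            kober_kernel (merge_last n a j) (dir_beta n (merge_last n a) j) (u j) (v j)) \<partial>lbk n)"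
      by (intro Suc.IH Hw) (use Suc.prems(1) in auto)
    ultimately show ?thesis by (simp only: K_def)
  qed
  have K_Suc: "ennreal (\<Prod>j\<in>{1..Suc n}. kober_kernel (a j) (dir_beta (Suc n) a j) ((u(Suc n := w)) j) (v j))
      = K u * k w" for u w
    by (simp add: prod_fun_upd_Suc dir_beta_last K_def k_def ennreal_mult prod_nonneg kober_kernel_nonneg)
  have "(\<integral>\<^sup>+x. H (u_transform (Suc n) x v) * ennreal (dirichlet_weight (Suc n) a x) \<partial>lbk (Suc n))
      = (\<integral>\<^sup>+x. \<integral>\<^sup>+y. H (u_transform (Suc n) (x(Suc n := y)) v) *
            ennreal (dirichlet_weight (Suc n) a (x(Suc n := y))) \<partial>lborel \<partial>lbk n)"
    by (rule nn_integral_lbk_Suc) measurable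
  also have "\<dots> = (\<integral>\<^sup>+x. ennreal (dirichlet_weight n (merge_last n a) x) *
            (\<integral>\<^sup>+w. H ((u_transform n x v)(Suc n := w)) * k w \<partial>lborel) \<partial>lbk n)"
    using Suc.prems(1) unfolding k_def by (intro nn_integral_cong nn_integral_dirichlet_weight_last H) simp
  also have "\<dots> = (\<integral>\<^sup>+x. \<integral>\<^sup>+w. ennreal (dirichlet_weight n (merge_last n a) x) *
            (H ((u_transform n x v)(Suc n := w)) * k w) \<partial>lborel \<partial>lbk n)"
    by (intro nn_integral_cong nn_integral_cmult[symmetric]) measurable
  also have "\<dots> = (\<integral>\<^sup>+w. \<integral>\<^sup>+x. ennreal (dirichlet_weight n (merge_last n a) x) *
            (H ((u_transform n x v)(Suc n := w)) * k w) \<partial>lbk n \<partial>lborel)"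
    by (rule Fubini'[symmetric]) measurable
  also have "\<dots> = (\<integral>\<^sup>+w. k w * (\<integral>\<^sup>+x. H ((u_transform n x v)(Suc n := w)) *
            ennreal (dirichlet_weight n (merge_last n a) x) \<partial>lbk n) \<partial>lborel)"
    by (intro nn_integral_cong, subst nn_integral_cmult[symmetric]) (measurable, simp add: mult_ac)
  also have "\<dots> = (\<integral>\<^sup>+w. \<integral>\<^sup>+u. H (u(Suc n := w)) * (K u * k w) \<partial>lbk n \<partial>lborel)"
    unfolding IH by (intro nn_integral_cong, subst nn_integral_cmult[symmetric]) (measurable, simp add: mult_ac)
  also have "\<dots> = (\<integral>\<^sup>+u. H u * ennreal (\<Prod>j\<in>{1..Suc n}.
            kober_kernel (a j) (dir_beta (Suc n) a j) (u j) (v j)) \<partial>lbk (Suc n))"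
    unfolding K_Suc[symmetric] by (rule nn_integral_lbk_Suc_rev[symmetric]) measurable
  finally show ?case .
qed

lemma dir_beta_pos:
  assumes "\<forall>j\<in>{1..k}. \<alpha> j > -1" "\<alpha> (k+1) > 0" "j \<le> k"
  shows "dir_beta k \<alpha> j > 0"
proof -
  have "(\<Sum>i\<in>{j+1..k}. \<alpha> i) + real (k - j) = (\<Sum>i\<in>{j+1..k}. \<alpha> i + 1)"
    by (simp add: sum.distrib)
  moreover have "(\<Sum>i\<in>{j+1..k}. \<alpha> i + 1) \<ge> 0"
  proof (intro sum_nonneg)
    fix i assume "i \<in> {j+1..k}"
    then have "\<alpha> i > -1" using assms(1) by auto
    then show "0 \<le> \<alpha> i + 1" by simp
  qed
  ultimately show ?thesis using assms(2) unfolding dir_beta_def by simp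
qed

lemma dir_beta_0: "dir_beta k \<alpha> 0 = (\<Sum>j\<in>{1..k+1}. \<alpha> j) + real k"
  by (simp add: dir_beta_def add_ac)

lemma dir_beta_pred:
  assumes "j \<in> {1..k}"
  shows "\<alpha> j + dir_beta k \<alpha> j + 1 = dir_beta k \<alpha> (j - 1)"
proof -
  have "(\<Sum>i\<in>{j-1+1..k}. \<alpha> i) = \<alpha> j + (\<Sum>i\<in>{j+1..k}. \<alpha> i)"
    using assms by (simp add: sum.atLeast_Suc_atMost)
  moreover have "real (k - (j - 1)) = real (k - j) + 1" using assms by auto
  ultimately show ?thesis unfolding dir_beta_def by simp
qed

lemma dirichlet_const_pos:
  assumes "\<forall>j\<in>{1..k}. \<alpha> j > -1" "\<alpha> (k+1) > 0"
  shows "dirichlet_const k \<alpha> > 0"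
proof -
  have "(\<Prod>j\<in>{1..k}. Gamma (\<alpha> j + 1)) > 0"
    using assms(1) by (intro prod_pos Gamma_real_pos) force
  then show ?thesis
    using dir_beta_pos[OF assms, of 0] assms(2)
    by (auto simp: dirichlet_const_def dir_beta_0 intro!: divide_pos_pos mult_pos_pos Gamma_real_pos)
qed

text \<open>By \<open>dir_beta_pred\<close> the Gamma factors telescope.\<close>
lemma Gamma_ratio_prod_dirichlet_const:
  assumes "\<forall>j\<in>{1..k}. \<alpha> j > -1" "\<alpha> (k+1) > 0"
  shows "(\<Prod>j\<in>{1..k}. Gamma (\<alpha> j + 1) / Gamma (\<alpha> j + dir_beta k \<alpha> j + 1)) * dirichlet_const k \<alpha>
       = 1 / (\<Prod>j\<in>{1..k}. Gamma (dir_beta k \<alpha> j))"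
proof -
  define \<beta> where "\<beta> = dir_beta k \<alpha>"
  have G\<beta>: "0 < Gamma (\<beta> j)" if "j \<le> k" for j
    using dir_beta_pos[OF assms that] by (simp add: \<beta>_def Gamma_real_pos)
  define A where "A = (\<Prod>j\<in>{1..k}. Gamma (\<alpha> j + 1))"
  define B where "B = (\<Prod>j\<in>{1..k}. Gamma (\<beta> j))"
  have "0 < A" using assms(1) unfolding A_def by (intro prod_pos Gamma_real_pos) force
  have "0 < B" using G\<beta> unfolding B_def by (intro prod_pos) auto
  have "(\<Prod>j\<in>{1..k}. Gamma (\<alpha> j + 1) / Gamma (\<alpha> j + \<beta> j + 1))
      = (\<Prod>j\<in>{1..k}. Gamma (\<alpha> j + 1) / Gamma (\<beta> j) * (Gamma (\<beta> j) / Gamma (\<beta> (j - 1))))"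
    using G\<beta> by (intro prod.cong) (auto simp: \<beta>_def dir_beta_pred less_imp_neq[symmetric])
  also have "\<dots> = (\<Prod>j\<in>{1..k}. Gamma (\<alpha> j + 1) / Gamma (\<beta> j)) *
      (\<Prod>j\<in>{1..k}. Gamma (\<beta> j) / Gamma (\<beta> (j - 1)))"
    by (rule prod.distrib)
  also have "(\<Prod>j\<in>{1..k}. Gamma (\<beta> j) / Gamma (\<beta> (j - 1))) = Gamma (\<beta> k) / Gamma (\<beta> 0)"
    using prod_telescope''[of 0 k "\<lambda>j. Gamma (\<beta> j)"] G\<beta> by (simp add: less_imp_neq[symmetric])
  also have "(\<Prod>j\<in>{1..k}. Gamma (\<alpha> j + 1) / Gamma (\<beta> j)) = A / B"
    unfolding A_def B_def by (rule prod_dividef)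
  finally have ratios: "(\<Prod>j\<in>{1..k}. Gamma (\<alpha> j + 1) / Gamma (\<alpha> j + \<beta> j + 1))
      = A / B * (Gamma (\<beta> k) / Gamma (\<beta> 0))" .
  have const: "dirichlet_const k \<alpha> = Gamma (\<beta> 0) / (A * Gamma (\<beta> k))"
    by (simp add: dirichlet_const_def dir_beta_0 dir_beta_last A_def \<beta>_def)
  have "A / B * (Gamma (\<beta> k) / Gamma (\<beta> 0)) * (Gamma (\<beta> 0) / (A * Gamma (\<beta> k))) = 1 / B"
    using \<open>0 < A\<close> \<open>0 < B\<close> G\<beta>[of 0] G\<beta>[of k] by (simp add: field_simps)
  then have "(\<Prod>j\<in>{1..k}. Gamma (\<alpha> j + 1) / Gamma (\<alpha> j + \<beta> j + 1)) * dirichlet_const k \<alpha> = 1 / B"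
    unfolding ratios const .
  then show ?thesis by (simp only: \<beta>_def B_def)
qed

lemma dirichlet1_density_eq:
  assumes "k \<ge> 1"
  shows "dirichlet1_density k \<alpha> x = dirichlet_const k \<alpha> * dirichlet_weight k \<alpha> x"
proof -
  have "x \<in> dirichlet_support k \<longleftrightarrow> (\<forall>j\<in>{1..k}. 0 < x j) \<and> (\<Sum>j\<in>{1..k}. x j) < 1"
  proof
    assume x: "(\<forall>j\<in>{1..k}. 0 < x j) \<and> (\<Sum>j\<in>{1..k}. x j) < 1"
    have "x j \<le> (\<Sum>j\<in>{1..k}. x j)" if "j \<in> {1..k}" for j
      using x that by (intro member_le_sum) (simp_all add: less_imp_le)
    moreover have "0 < (\<Sum>j\<in>{1..k}. x j)" using x assms by (intro sum_pos) auto
    ultimately show "x \<in> dirichlet_support k" using x unfolding dirichlet_support_def by force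
  qed (auto simp: dirichlet_support_def)
  then show ?thesis unfolding dirichlet1_density_def dirichlet_weight_def by simp
qed

lemma nn_integral_dirichlet1_density_u_transform:
  assumes "k \<ge> 1" "\<forall>j\<in>{1..k}. \<alpha> j > -1" "\<alpha> (k+1) > 0"
    and "v \<in> pos_orthant k" and H[measurable]: "H \<in> borel_measurable (lbk k)"
  shows "(\<integral>\<^sup>+x. ennreal (dirichlet1_density k \<alpha> x) * H (u_transform k x v) \<partial>lbk k)
       = (\<integral>\<^sup>+u. ennreal (dirichlet_const k \<alpha> *
            (\<Prod>j\<in>{1..k}. kober_kernel (\<alpha> j) (dir_beta k \<alpha> j) (u j) (v j))) * H u \<partial>lbk k)"
proof -
  define C where "C = dirichlet_const k \<alpha>"
  have "0 \<le> C" using dirichlet_const_pos[OF assms(2,3)] by (simp add: C_def)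
  have "(\<integral>\<^sup>+x. ennreal (dirichlet1_density k \<alpha> x) * H (u_transform k x v) \<partial>lbk k)
      = (\<integral>\<^sup>+x. ennreal C * (H (u_transform k x v) * ennreal (dirichlet_weight k \<alpha> x)) \<partial>lbk k)"
    using \<open>0 \<le> C\<close>
    by (simp add: dirichlet1_density_eq[OF assms(1)] C_def ennreal_mult dirichlet_weight_nonneg mult_ac)
  also have "\<dots> = ennreal C * (\<integral>\<^sup>+x. H (u_transform k x v) * ennreal (dirichlet_weight k \<alpha> x) \<partial>lbk k)"
    by (rule nn_integral_cmult) measurable
  also have "\<dots> = ennreal C * (\<integral>\<^sup>+u. H u *
      ennreal (\<Prod>j\<in>{1..k}. kober_kernel (\<alpha> j) (dir_beta k \<alpha> j) (u j) (v j)) \<partial>lbk k)"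
    using assms(4) nn_integral_u_transform_dirichlet_weight[OF _ H, of v \<alpha>]
    by (simp add: pos_orthant_def)
  also have "\<dots> = (\<integral>\<^sup>+u. ennreal (C *
      (\<Prod>j\<in>{1..k}. kober_kernel (\<alpha> j) (dir_beta k \<alpha> j) (u j) (v j))) * H u \<partial>lbk k)"
    using \<open>0 \<le> C\<close> by (subst nn_integral_cmult[symmetric])
      (measurable, simp add: ennreal_mult prod_nonneg kober_kernel_nonneg mult_ac)
  finally show ?thesis by (simp add: C_def)
qed

lemma kober2_eq_integral_kober_kernel:
  assumes "u \<in> pos_orthant k"
  shows "kober2 k \<zeta> a f u
       = (LINT v | lbk k. (\<Prod>j\<in>{1..k}. kober_kernel (\<zeta> j) (a j) (u j) (v j)) * f v) /
         (\<Prod>j\<in>{1..k}. Gamma (a j))"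
proof -
  define S where "S = {v \<in> space (lbk k). \<forall>j\<in>{1..k}. u j < v j}"
  define Q where "Q = (\<Prod>j\<in>{1..k}. u j powr \<zeta> j)"
  define F where "F v = (\<Prod>j\<in>{1..k}. (v j - u j) powr (a j - 1) * v j powr (- \<zeta> j - a j)) * f v" for v
  have u_pos: "\<forall>j\<in>{1..k}. 0 < u j" using assms by (simp add: pos_orthant_def)
  have "Q * (indicator S v * F v) = (\<Prod>j\<in>{1..k}. kober_kernel (\<zeta> j) (a j) (u j) (v j)) * f v"
    if "v \<in> space (lbk k)" for v
  proof (cases "\<forall>j\<in>{1..k}. u j < v j")
    case True
    then have "(\<Prod>j\<in>{1..k}. kober_kernel (\<zeta> j) (a j) (u j) (v j))
        = (\<Prod>j\<in>{1..k}. u j powr \<zeta> j * ((v j - u j) powr (a j - 1) * v j powr (- \<zeta> j - a j)))"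
      using u_pos by (intro prod.cong) (auto simp: kober_kernel_def mult_ac)
    then show ?thesis
      using True that by (simp add: S_def F_def Q_def prod.distrib mult_ac)
  next
    case False
    then obtain j where j: "j \<in> {1..k}" "\<not> u j < v j" by auto
    then have "(\<Prod>j\<in>{1..k}. kober_kernel (\<zeta> j) (a j) (u j) (v j)) = 0"
      by (intro prod_zero) (auto simp: kober_kernel_def)
    moreover have "v \<notin> S" using False by (simp add: S_def)
    ultimately show ?thesis by simp
  qed
  then have "Q * (LINT v : S | lbk k. F v)
      = (LINT v | lbk k. (\<Prod>j\<in>{1..k}. kober_kernel (\<zeta> j) (a j) (u j) (v j)) * f v)"
    unfolding set_lebesgue_integral_def integral_mult_right_zero[symmetric]
    by (intro Bochner_Integration.integral_cong) auto
  moreover have "kober2 k \<zeta> a f u = Q / (\<Prod>j\<in>{1..k}. Gamma (a j)) * (LINT v : S | lbk k. F v)"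
    by (simp add: kober2_def S_def F_def Q_def prod_dividef)
  ultimately show ?thesis by simp
qed

lemma kober2_eq_density_of_u_transform:
  assumes "\<forall>j\<in>{1..k}. \<alpha> j > -1" "\<alpha> (k+1) > 0" "u \<in> pos_orthant k"
    and f_nonneg: "\<forall>v. 0 \<le> f v" and [measurable]: "f \<in> borel_measurable (lbk k)" and "0 \<le> c"
    and density: "(\<integral>\<^sup>+v. ennreal (f v) * ennreal (dirichlet_const k \<alpha> *
          (\<Prod>j\<in>{1..k}. kober_kernel (\<alpha> j) (dir_beta k \<alpha> j) (u j) (v j))) \<partial>lbk k) = ennreal c"
  shows "(\<Prod>j\<in>{1..k}. Gamma (\<alpha> j + 1) / Gamma (\<alpha> j + dir_beta k \<alpha> j + 1)) * c
       = kober2 k \<alpha> (dir_beta k \<alpha>) f u"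
proof -
  define C where "C = dirichlet_const k \<alpha>"
  define F where "F v = (\<Prod>j\<in>{1..k}. kober_kernel (\<alpha> j) (dir_beta k \<alpha> j) (u j) (v j)) * f v" for v
  have "0 < C" using dirichlet_const_pos[OF assms(1,2)] by (simp add: C_def)
  have F_nonneg: "0 \<le> F v" for v
    using f_nonneg by (simp add: F_def prod_nonneg kober_kernel_nonneg)
  have "(\<integral>\<^sup>+v. ennreal (C * F v) \<partial>lbk k) = ennreal c"
    using density \<open>0 < C\<close> F_nonneg f_nonneg
    by (simp add: C_def F_def ennreal_mult[symmetric] prod_nonneg kober_kernel_nonneg mult_ac)
  moreover have "(\<lambda>v. C * F v) \<in> borel_measurable (lbk k)" unfolding F_def by measurable
  ultimately have "(LINT v | lbk k. C * F v) = c"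
    using nn_integral_eq_integrable[of "\<lambda>v. C * F v" "lbk k" c] \<open>0 < C\<close> F_nonneg \<open>0 \<le> c\<close>
    by simp
  then have "c = C * (LINT v | lbk k. F v)" by simp
  then have "(\<Prod>j\<in>{1..k}. Gamma (\<alpha> j + 1) / Gamma (\<alpha> j + dir_beta k \<alpha> j + 1)) * c
      = ((\<Prod>j\<in>{1..k}. Gamma (\<alpha> j + 1) / Gamma (\<alpha> j + dir_beta k \<alpha> j + 1)) * C) *
        (LINT v | lbk k. F v)"
    by simp
  also have "\<dots> = (LINT v | lbk k. F v) / (\<Prod>j\<in>{1..k}. Gamma (dir_beta k \<alpha> j))"
    using Gamma_ratio_prod_dirichlet_const[OF assms(1,2)] by (simp add: C_def)
  also have "\<dots> = kober2 k \<alpha> (dir_beta k \<alpha>) f u"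
    by (simp add: kober2_eq_integral_kober_kernel[OF assms(3)] F_def)
  finally show ?thesis .
qed

theorem theorem1p2:
  fixes M :: "'a measure" and k :: nat and \<alpha> :: "nat \<Rightarrow> real"
    and X V :: "'a \<Rightarrow> nat \<Rightarrow> real"
    and f g :: "(nat \<Rightarrow> real) \<Rightarrow> real"
  assumes "prob_space M"
    and "k \<ge> 1"
    and "\<forall>j\<in>{1..k}. \<alpha> j > -1"
    and "\<alpha> (k+1) > 0"
    and "distributed M (lbk k) X (\<lambda>x. ennreal (dirichlet1_density k \<alpha> x))"
    and "distributed M (lbk k) V (\<lambda>v. ennreal (f v))"
    and "\<forall>v. f v \<ge> 0"
    and "\<forall>v. v \<notin> pos_orthant k \<longrightarrow> f v = 0"
    and "prob_space.indep_var M (lbk k) X (lbk k) V"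
    and "distributed M (lbk k) (\<lambda>\<omega>. u_transform k (X \<omega>) (V \<omega>)) (\<lambda>u. ennreal (g u))"
    and "\<forall>u. g u \<ge> 0"
  shows "AE u in lbk k. u \<in> pos_orthant k \<longrightarrow>
           (\<Prod>j\<in>{1..k}. Gamma (\<alpha> j + 1) / Gamma (\<alpha> j + dir_beta k \<alpha> j + 1)) * g u
           = kober2 k \<alpha> (dir_beta k \<alpha>) f u"
proof -
  interpret prob_space M by fact
  define K where "K u v = ennreal (dirichlet_const k \<alpha> *
      (\<Prod>j\<in>{1..k}. kober_kernel (\<alpha> j) (dir_beta k \<alpha> j) (u j) (v j)))" for u v
  have f_measurable[measurable]: "f \<in> borel_measurable (lbk k)"
    using distributed_real_measurable assms(6,7) by metis
  have "(\<lambda>(u, v). K u v) \<in> borel_measurable (lbk k \<Otimes>\<^sub>M lbk k)"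
    unfolding K_def by measurable
  moreover have "(\<integral>\<^sup>+x. ennreal (dirichlet1_density k \<alpha> x) * indicator A (u_transform k x v) \<partial>lbk k)
      = (\<integral>\<^sup>+u. K u v * indicator A u \<partial>lbk k)"
    if "v \<in> space (lbk k)" "ennreal (f v) \<noteq> 0" "A \<in> sets (lbk k)" for v A
    using that assms(8) unfolding K_def
    by (intro nn_integral_dirichlet1_density_u_transform assms(2-4)) auto
  ultimately have "distributed M (lbk k) (\<lambda>\<omega>. u_transform k (X \<omega>) (V \<omega>))
      (\<lambda>u. \<integral>\<^sup>+v. ennreal (f v) * K u v \<partial>lbk k)"
    by (rule distributed_indep_transform[OF sigma_finite_lbk sigma_finite_lbk sigma_finite_lbk
          assms(5,6,9) u_transform_measurable_pair])
  then have "AE u in lbk k. ennreal (g u) = (\<integral>\<^sup>+v. ennreal (f v) * K u v \<partial>lbk k)"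
    using distributed_unique assms(10) by blast
  then show ?thesis
  proof eventually_elim
    case (elim u)
    show ?case
      using kober2_eq_density_of_u_transform[OF assms(3,4) _ assms(7) f_measurable _
          elim[symmetric, unfolded K_def]] assms(11)
      by simp
  qed
qed

end
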